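(* Let $s\ge2$ be such that $s-1$, $s$ and $s+1$ are all knots of $p_0$. Then with probability one there exists $n_0$ such that for all $n\ge n_0$, $\hat p_n(s)=p_n(s)$. In particular $\sqrt n(\hat p_n(s)-p_0(s))$ converges in distribution to $\mathcal N(0,p_0(s)(1-p_0(s)))$.
   Context: Let $\mathbb N=\{0,1,\dots\}$. For a real sequence $p$ and $k\ge1$ let $\Delta p(k)=p(k+1)-2p(k)+p(k-1)$; $p$ is convex if $\Delta p(k)\ge0$ for all $k\ge1$; $\mathcal C$ is the set of convex sequences with $\sum_kp(k)^2<\infty$. A knot of $p$ is an integer $k\ge1$ with $\Delta p(k)>0$. Let $p_0$ be a convex probability mass function on $\mathbb N$ whose support is either $\mathbb N$ or $\{0,\dots,S\}$ for some integer $S\ge1$. Let $X_1,X_2,\dots$ be i.i.d. with pmf $p_0$, $p_n(j)=\frac1n\sum_{i\le n}\mathbb 1\{X_i=j\}$, and let $\hat p_n$ be the unique minimizer over $\mathcal C$ of $\frac12\sum_j(p_n(j)-p(j))^2$. *)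

theory Defs
  imports "HOL-Probability.Probability"
begin

text \<open>Second difference of a real sequence, for k >= 1.\<close>
definition sdiff :: "(nat \<Rightarrow> real) \<Rightarrow> nat \<Rightarrow> real" where
  "sdiff p k = p (k + 1) - 2 * p k + p (k - 1)"

definition convex_seq :: "(nat \<Rightarrow> real) \<Rightarrow> bool" where
  "convex_seq p \<longleftrightarrow> (\<forall>k\<ge>1. sdiff p k \<ge> 0)"

definition convexL2 :: "(nat \<Rightarrow> real) set" where
  "convexL2 = {p. convex_seq p \<and> summable (\<lambda>k. (p k)\<^sup>2)}"

definition knot :: "(nat \<Rightarrow> real) \<Rightarrow> nat \<Rightarrow> bool" where
  "knot p k \<longleftrightarrow> k \<ge> 1 \<and> sdiff p k > 0"

definition ls_crit :: "(nat \<Rightarrow> real) \<Rightarrow> (nat \<Rightarrow> real) \<Rightarrow> real" where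
  "ls_crit q p = (1/2) * (\<Sum>j. (q j - p j)\<^sup>2)"

definition ls_convex :: "(nat \<Rightarrow> real) \<Rightarrow> (nat \<Rightarrow> real)" where
  "ls_convex q = (THE p. p \<in> convexL2 \<and> (\<forall>p'\<in>convexL2. ls_crit q p \<le> ls_crit q p'))"

definition emp_pmf :: "(nat \<Rightarrow> 'a \<Rightarrow> nat) \<Rightarrow> nat \<Rightarrow> 'a \<Rightarrow> nat \<Rightarrow> real" where
  "emp_pmf X n \<omega> j = real (card {i. i < n \<and> X i \<omega> = j}) / real n"

end

theory Submission
  imports Defs
begin

(* The projection ls_convex q of a square-summable q onto the class C of square-summable
   convex sequences exists and is unique (compactness and the parallelogram identity),
   and is coordinatewise stable: it lies within 2 * dist q p of every p in C.  If
   s - 1, s, s + 1 are knots of the projection, then it coincides with q at s, because a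
   small bump at s towards q s keeps convexity and lowers the criterion.

   For an i.i.d. sample, the empirical pmf converges pointwise almost surely (Hoeffding
   and Borel-Cantelli), hence in l2 (Scheffe).  By stability, s - 1, s, s + 1 are then
   eventually knots of the estimator, which therefore eventually equals the empirical
   pmf at s.  Since the empirical frequency at s satisfies the central limit theorem,
   the scaled estimator, being almost surely eventually equal to it, has the same
   Gaussian limit. *)

lemma convex_seq_increments_mono:
  assumes "convex_seq p"
  shows "p (Suc k) - p k \<le> p (Suc (k + i)) - p (k + i)"
proof (induction i)
  case 0 then show ?case by simp
next
  case (Suc i)
  have "sdiff p (Suc (k + i)) \<ge> 0" using assms unfolding convex_seq_def by auto
  then have "p (Suc (k + i)) - p (k + i) \<le> p (Suc (Suc (k + i))) - p (Suc (k + i))"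
    unfolding sdiff_def by simp
  then show ?case using Suc.IH by simp
qed

lemma square_summable_tendsto_zero:
  fixes p :: "nat \<Rightarrow> real"
  assumes "summable (\<lambda>k. (p k)\<^sup>2)"
  shows "p \<longlonglongrightarrow> 0"
proof -
  have "(\<lambda>k. sqrt ((p k)\<^sup>2)) \<longlonglongrightarrow> sqrt 0"
    by (rule tendsto_real_sqrt[OF summable_LIMSEQ_zero[OF assms]])
  then show ?thesis by (simp add: tendsto_rabs_zero_iff)
qed

(* Every element of C is nonincreasing: its increments are nondecreasing and tend
   to zero, hence are nonpositive. *)
lemma convexL2_decseq:
  assumes "p \<in> convexL2"
  shows "decseq p"
proof (rule decseq_SucI)
  fix k
  have cv: "convex_seq p" and lim: "p \<longlonglongrightarrow> 0"
    using assms square_summable_tendsto_zero by (auto simp: convexL2_def)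
  have "(\<lambda>i. p (i + Suc k) - p (i + k)) \<longlonglongrightarrow> 0 - 0"
    by (intro tendsto_diff LIMSEQ_ignore_initial_segment lim)
  then have "(\<lambda>i. p (Suc (k + i)) - p (k + i)) \<longlonglongrightarrow> 0"
    by (simp add: add.commute)
  then have "p (Suc k) - p k \<le> 0"
    using convex_seq_increments_mono[OF cv] by (intro LIMSEQ_le_const) auto
  then show "p (Suc k) \<le> p k" by simp
qed

lemma convexL2_nonneg: "p \<in> convexL2 \<Longrightarrow> 0 \<le> p k"
  using decseq_ge[OF convexL2_decseq square_summable_tendsto_zero]
  by (auto simp: convexL2_def)

lemma convexL2_le_first: "p \<in> convexL2 \<Longrightarrow> p k \<le> p 0"
  using convexL2_decseq by (simp add: decseq_def)

(* An element of C is positive just before a knot: otherwise it vanishes from there on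
   and its second difference at the knot is zero. *)
lemma convexL2_pos_before_knot:
  assumes "p \<in> convexL2" and "knot p k"
  shows "0 < p (k - 1)"
proof (rule ccontr)
  assume "\<not> 0 < p (k - 1)"
  then have "p (k - 1) = 0" using convexL2_nonneg[OF assms(1)] by (simp add: order.antisym)
  moreover have "p k \<le> p (k - 1)" "p (k + 1) \<le> p k" "0 \<le> p (k + 1)"
    using assms convexL2_decseq[OF assms(1)] convexL2_nonneg[OF assms(1)]
    by (auto simp: decseq_def knot_def)
  ultimately have "sdiff p k = 0" by (simp add: sdiff_def)
  with assms(2) show False by (simp add: knot_def)
qed

definition sqdist :: "(nat \<Rightarrow> real) \<Rightarrow> (nat \<Rightarrow> real) \<Rightarrow> real" where
  "sqdist q p = (\<Sum>j. (q j - p j)\<^sup>2)"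

lemma ls_crit_sqdist: "ls_crit q p = sqdist q p / 2"
  by (simp add: ls_crit_def sqdist_def)

lemma sqdist_nonneg: "summable (\<lambda>j. (q j - p j)\<^sup>2) \<Longrightarrow> 0 \<le> sqdist q p"
  unfolding sqdist_def by (rule suminf_nonneg) auto

lemma sq_diff_le: "((a::real) - b)\<^sup>2 \<le> 2 * a\<^sup>2 + 2 * b\<^sup>2"
proof -
  have "0 \<le> (a + b)\<^sup>2" by simp
  then show ?thesis unfolding power2_eq_square by (simp add: algebra_simps)
qed

lemma summable_sq_diff:
  fixes a b :: "nat \<Rightarrow> real"
  assumes "summable (\<lambda>j. (a j)\<^sup>2)" "summable (\<lambda>j. (b j)\<^sup>2)"
  shows "summable (\<lambda>j. (a j - b j)\<^sup>2)"
  by (rule summable_comparison_test[OF _ summable_add[OF summable_mult[OF assms(1), of 2]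
        summable_mult[OF assms(2), of 2]]]) (auto intro: sq_diff_le)

lemma sq_diff_le_sqdist:
  fixes q p :: "nat \<Rightarrow> real"
  assumes "summable (\<lambda>j. (q j - p j)\<^sup>2)"
  shows "(q j - p j)\<^sup>2 \<le> sqdist q p"
  unfolding sqdist_def using sum_le_suminf[OF assms, of "{j}"] by simp

lemma sqdist_triangle_sq:
  fixes a b c :: "nat \<Rightarrow> real"
  assumes ab: "summable (\<lambda>j. (a j - b j)\<^sup>2)" and bc: "summable (\<lambda>j. (b j - c j)\<^sup>2)"
  shows "summable (\<lambda>j. (a j - c j)\<^sup>2)" and "sqdist a c \<le> 2 * sqdist a b + 2 * sqdist b c"
proof -
  have le: "(a j - c j)\<^sup>2 \<le> 2 * (a j - b j)\<^sup>2 + 2 * (b j - c j)\<^sup>2" for j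
    using sq_diff_le[of "a j - b j" "c j - b j"] by (simp add: power2_commute)
  have sum: "(\<lambda>j. 2 * (a j - b j)\<^sup>2 + 2 * (b j - c j)\<^sup>2) sums (2 * sqdist a b + 2 * sqdist b c)"
    unfolding sqdist_def by (intro sums_add sums_mult summable_sums ab bc)
  show ac: "summable (\<lambda>j. (a j - c j)\<^sup>2)"
    by (rule summable_comparison_test[OF _ sums_summable[OF sum]]) (auto intro: le)
  show "sqdist a c \<le> 2 * sqdist a b + 2 * sqdist b c"
    using sums_le[OF le summable_sums[OF ac] sum] by (simp add: sqdist_def)
qed

(* A sequence of sequences with values in a fixed interval has a pointwise convergent
   subsequence (Tychonoff, i.e. compactness of the product of intervals). *)
lemma bounded_seq_pointwise_convergent_subseq:
  fixes f :: "nat \<Rightarrow> nat \<Rightarrow> real"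
  assumes "\<And>k i. f k i \<in> {0..B}"
  shows "\<exists>r g. strict_mono r \<and> (\<forall>i. (\<lambda>k. f (r k) i) \<longlonglongrightarrow> g i)"
proof -
  define K :: "(nat \<Rightarrow> real) set" where "K = PiE UNIV (\<lambda>i. {0..B})"
  have "compactin (product_topology (\<lambda>i. euclidean) UNIV) K"
    unfolding K_def by (subst compactin_PiE) auto
  then have "seq_compact K"
    by (simp add: euclidean_product_topology compactin_euclidean_iff compact_imp_seq_compact)
  moreover have "\<And>k. f k \<in> K" using assms by (auto simp: K_def)
  ultimately obtain g r where r: "strict_mono r" and lim: "(f \<circ> r) \<longlonglongrightarrow> g"
    unfolding seq_compact_def by meson
  have "(\<lambda>k. f (r k) i) \<longlonglongrightarrow> g i" for i
  proof -
    have "continuous_on UNIV (\<lambda>x::nat\<Rightarrow>real. x i)" by simp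
    then have "isCont (\<lambda>x::nat\<Rightarrow>real. x i) g"
      using continuous_on_eq_continuous_at open_UNIV by blast
    from isCont_tendsto_compose[OF this lim] show ?thesis by (simp add: o_def)
  qed
  with r show ?thesis by blast
qed

lemma convex_seq_pointwise_limit:
  assumes conv: "\<And>k. convex_seq (P k)" and lim: "\<And>j. (\<lambda>k. P k j) \<longlonglongrightarrow> g j"
  shows "convex_seq g"
  unfolding convex_seq_def
proof (intro allI impI)
  fix i :: nat assume "i \<ge> 1"
  then have "\<forall>k. 0 \<le> sdiff (P k) i" using conv by (auto simp: convex_seq_def)
  moreover have "(\<lambda>k. sdiff (P k) i) \<longlonglongrightarrow> sdiff g i"
    unfolding sdiff_def by (intro tendsto_intros lim)
  ultimately show "0 \<le> sdiff g i" by (intro LIMSEQ_le_const) auto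
qed

(* Lower semicontinuity of the distance under pointwise convergence (Fatou for series):
   bounds on the distances pass to the pointwise limit. *)
lemma sqdist_pointwise_limit_le:
  assumes lim: "\<And>j. (\<lambda>k. P k j) \<longlonglongrightarrow> g j"
    and sm: "\<And>k. summable (\<lambda>j. (q j - P k j)\<^sup>2)"
    and bound: "\<And>k. sqdist q (P k) \<le> c k" and c: "c \<longlonglongrightarrow> m"
  shows "summable (\<lambda>j. (q j - g j)\<^sup>2)" and "sqdist q g \<le> m"
proof -
  have partial: "(\<Sum>j<N. (q j - g j)\<^sup>2) \<le> m" for N
  proof (rule LIMSEQ_le[OF _ c])
    show "(\<lambda>k. \<Sum>j<N. (q j - P k j)\<^sup>2) \<longlonglongrightarrow> (\<Sum>j<N. (q j - g j)\<^sup>2)"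
      by (intro tendsto_intros lim)
    have "(\<Sum>j<N. (q j - P k j)\<^sup>2) \<le> c k" for k
      using sum_le_suminf[OF sm, of "{..<N}" k] bound[of k] by (simp add: sqdist_def)
    then show "\<exists>N'. \<forall>k\<ge>N'. (\<Sum>j<N. (q j - P k j)\<^sup>2) \<le> c k" by blast
  qed
  show sg: "summable (\<lambda>j. (q j - g j)\<^sup>2)"
    by (rule summableI_nonneg_bounded[OF _ partial]) simp
  show "sqdist q g \<le> m"
    unfolding sqdist_def by (rule suminf_le_const[OF sg partial])
qed

(* Elements of C are bounded in terms of their distance to a square-summable q,
   since they are decreasing and nonnegative. *)
lemma convexL2_sq_le:
  assumes p: "p \<in> convexL2" and sq: "summable (\<lambda>j. (q j)\<^sup>2)"
    and qp: "summable (\<lambda>j. (q j - p j)\<^sup>2)"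
  shows "(p j)\<^sup>2 \<le> 2 * (\<Sum>i. (q i)\<^sup>2) + 2 * sqdist q p"
proof -
  have "(p j)\<^sup>2 \<le> (p 0)\<^sup>2"
    using convexL2_nonneg[OF p] convexL2_le_first[OF p] by (simp add: power_mono)
  also have "\<dots> \<le> 2 * (q 0)\<^sup>2 + 2 * (q 0 - p 0)\<^sup>2"
    using sq_diff_le[of "q 0" "q 0 - p 0"] by simp
  also have "\<dots> \<le> 2 * (\<Sum>i. (q i)\<^sup>2) + 2 * sqdist q p"
  proof -
    have "(q 0)\<^sup>2 \<le> (\<Sum>i. (q i)\<^sup>2)"
      using sq_diff_le_sqdist[of q "\<lambda>_. 0"] sq by (simp add: sqdist_def)
    moreover have "(q 0 - p 0)\<^sup>2 \<le> sqdist q p" by (rule sq_diff_le_sqdist[OF qp])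
    ultimately show ?thesis by (intro add_mono mult_left_mono) auto
  qed
  finally show ?thesis .
qed

(* Existence of a least-squares convex fit: a minimising sequence is uniformly bounded,
   so it has a pointwise limit, which lies in C and attains the infimum. *)
lemma ls_exists:
  assumes sq: "summable (\<lambda>j. (q j)\<^sup>2)"
  shows "\<exists>p\<in>convexL2. \<forall>p'\<in>convexL2. ls_crit q p \<le> ls_crit q p'"
proof -
  have sm: "summable (\<lambda>j. (q j - p j)\<^sup>2)" if "p \<in> convexL2" for p
    using summable_sq_diff[OF sq] that by (simp add: convexL2_def)
  define m where "m = (INF p\<in>convexL2. sqdist q p)"
  have bdd: "bdd_below (sqdist q ` convexL2)"
    using sqdist_nonneg[OF sm] by (auto intro: bdd_belowI[of _ 0])
  have m_le: "m \<le> sqdist q p" if "p \<in> convexL2" for p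
    unfolding m_def using bdd that by (rule cINF_lower)
  have "\<exists>p\<in>convexL2. sqdist q p < m + 1 / real (Suc k)" for k
  proof -
    have "(\<lambda>_. 0) \<in> convexL2" by (simp add: convexL2_def convex_seq_def sdiff_def)
    moreover have "m < m + 1 / real (Suc k)" by simp
    ultimately show ?thesis unfolding m_def using cINF_less_iff[OF _ bdd] by blast
  qed
  then obtain P where P: "\<And>k. P k \<in> convexL2" "\<And>k. sqdist q (P k) < m + 1 / real (Suc k)"
    by metis
  define B where "B = sqrt (2 * (\<Sum>i. (q i)\<^sup>2) + 2 * (m + 1))"
  have bounded: "P k j \<in> {0..B}" for k j
  proof -
    have "1 / real (Suc k) \<le> 1" by simp
    then have "sqdist q (P k) \<le> m + 1" using P(2)[of k] by linarith
    then have "(P k j)\<^sup>2 \<le> 2 * (\<Sum>i. (q i)\<^sup>2) + 2 * (m + 1)"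
      using convexL2_sq_le[OF P(1)[of k] sq sm[OF P(1)[of k]], of j] by simp
    then show ?thesis
      using convexL2_nonneg[OF P(1)] real_sqrt_le_mono unfolding B_def by fastforce
  qed
  obtain r g where r: "strict_mono r" and g: "\<And>j. (\<lambda>k. P (r k) j) \<longlonglongrightarrow> g j"
    using bounded_seq_pointwise_convergent_subseq[of P B, OF bounded] by blast
  have "(\<lambda>k. 1 / real (Suc k)) \<longlonglongrightarrow> 0"
    using LIMSEQ_inverse_real_of_nat by (simp add: inverse_eq_divide)
  from LIMSEQ_subseq_LIMSEQ[OF this r]
  have "(\<lambda>k. m + 1 / real (Suc (r k))) \<longlonglongrightarrow> m + 0"
    by (intro tendsto_add) (auto simp: o_def)
  then have sg: "summable (\<lambda>j. (q j - g j)\<^sup>2)" and g_le: "sqdist q g \<le> m"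
    using sqdist_pointwise_limit_le[OF g sm[OF P(1)], of "\<lambda>k. m + 1 / real (Suc (r k))"]
      less_imp_le[OF P(2)] by auto
  have "convex_seq g"
    using P(1) by (intro convex_seq_pointwise_limit[OF _ g]) (auto simp: convexL2_def)
  moreover have "summable (\<lambda>j. (g j)\<^sup>2)" using summable_sq_diff[OF sq sg] by simp
  ultimately have "g \<in> convexL2" by (simp add: convexL2_def)
  moreover have "sqdist q g \<le> sqdist q p'" if "p' \<in> convexL2" for p'
    using g_le m_le[OF that] by linarith
  ultimately show ?thesis by (auto simp: ls_crit_sqdist)
qed

lemma convex_seq_midpoint:
  assumes "convex_seq a" "convex_seq b"
  shows "convex_seq (\<lambda>j. (a j + b j) / 2)"
  unfolding convex_seq_def
proof (intro allI impI)
  fix k :: nat assume "k \<ge> 1"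
  then have "0 \<le> sdiff a k" "0 \<le> sdiff b k" using assms by (auto simp: convex_seq_def)
  then show "0 \<le> sdiff (\<lambda>j. (a j + b j) / 2) k" by (simp add: sdiff_def field_simps)
qed

lemma sqdist_midpoint:
  fixes q a b :: "nat \<Rightarrow> real"
  assumes qa: "summable (\<lambda>j. (q j - a j)\<^sup>2)" and qb: "summable (\<lambda>j. (q j - b j)\<^sup>2)"
  defines "c \<equiv> \<lambda>j. (a j + b j) / 2"
  shows "summable (\<lambda>j. (a j - b j)\<^sup>2)"
    and "sqdist q c = (sqdist q a + sqdist q b) / 2 - sqdist a b / 4"
proof -
  have aq: "summable (\<lambda>j. (a j - q j)\<^sup>2)" using qa by (simp add: power2_commute)
  show ab: "summable (\<lambda>j. (a j - b j)\<^sup>2)" by (rule sqdist_triangle_sq(1)[OF aq qb])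
  have pointwise: "(q j - c j)\<^sup>2 = ((q j - a j)\<^sup>2 + (q j - b j)\<^sup>2) / 2 - (a j - b j)\<^sup>2 / 4" for j
    by (simp add: c_def power2_eq_square field_simps)
  have "(\<lambda>j. ((q j - a j)\<^sup>2 + (q j - b j)\<^sup>2) / 2 - (a j - b j)\<^sup>2 / 4)
          sums ((sqdist q a + sqdist q b) / 2 - sqdist a b / 4)"
    unfolding sqdist_def by (intro sums_diff sums_divide sums_add summable_sums qa qb ab)
  then show "sqdist q c = (sqdist q a + sqdist q b) / 2 - sqdist a b / 4"
    unfolding sqdist_def pointwise by (rule sums_unique[symmetric])
qed

(* Uniqueness of the least-squares fit: two minimisers would have a strictly better
   midpoint unless they coincide. *)
lemma ls_unique:
  assumes sq: "summable (\<lambda>j. (q j)\<^sup>2)"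
    and a: "a \<in> convexL2" "\<forall>p\<in>convexL2. ls_crit q a \<le> ls_crit q p"
    and b: "b \<in> convexL2" "\<forall>p\<in>convexL2. ls_crit q b \<le> ls_crit q p"
  shows "a = b"
proof -
  have qa: "summable (\<lambda>j. (q j - a j)\<^sup>2)" and qb: "summable (\<lambda>j. (q j - b j)\<^sup>2)"
    using summable_sq_diff[OF sq] a(1) b(1) by (auto simp: convexL2_def)
  define c where "c = (\<lambda>j. (a j + b j) / 2)"
  have ab: "summable (\<lambda>j. (a j - b j)\<^sup>2)"
    and mid: "sqdist q c = (sqdist q a + sqdist q b) / 2 - sqdist a b / 4"
    using sqdist_midpoint[OF qa qb] unfolding c_def by auto
  have "summable (\<lambda>j. (a j - - b j)\<^sup>2 / 4)"
    using summable_sq_diff[of a "\<lambda>j. - b j"] a(1) b(1)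
    by (intro summable_divide) (auto simp: convexL2_def)
  then have "summable (\<lambda>j. (c j)\<^sup>2)" by (simp add: c_def power_divide)
  then have "c \<in> convexL2"
    using convex_seq_midpoint a(1) b(1) by (auto simp: convexL2_def c_def)
  then have "sqdist q a \<le> sqdist q c" and "sqdist q a = sqdist q b"
    using a b by (auto simp: ls_crit_sqdist intro: order.antisym)
  then have "sqdist a b \<le> 0" using mid by simp
  moreover have "0 \<le> sqdist a b" using sqdist_nonneg[OF ab] .
  ultimately have "(\<Sum>j. (a j - b j)\<^sup>2) = 0" by (simp add: sqdist_def)
  then have "\<forall>j. (a j - b j)\<^sup>2 = 0" using suminf_eq_zero_iff[OF ab] by simp
  then show "a = b" by auto
qed

lemma ls_convex_minimizes:
  assumes "summable (\<lambda>j. (q j)\<^sup>2)"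
  shows "ls_convex q \<in> convexL2" and "\<And>p. p \<in> convexL2 \<Longrightarrow> sqdist q (ls_convex q) \<le> sqdist q p"
proof -
  have "\<exists>!p. p \<in> convexL2 \<and> (\<forall>p'\<in>convexL2. ls_crit q p \<le> ls_crit q p')"
    using ls_exists[OF assms] ls_unique[OF assms] by blast
  from theI'[OF this] show "ls_convex q \<in> convexL2"
    and "\<And>p. p \<in> convexL2 \<Longrightarrow> sqdist q (ls_convex q) \<le> sqdist q p"
    unfolding ls_convex_def[symmetric] by (auto simp: ls_crit_sqdist)
qed

lemma ls_convex_close:
  assumes sq: "summable (\<lambda>j. (q j)\<^sup>2)" and p: "p \<in> convexL2"
  shows "\<bar>ls_convex q j - p j\<bar> \<le> 2 * sqrt (sqdist q p)"
proof -
  define h where "h = ls_convex q"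
  have h: "h \<in> convexL2" "sqdist q h \<le> sqdist q p"
    using ls_convex_minimizes[OF sq] p unfolding h_def by auto
  have qh: "summable (\<lambda>j. (q j - h j)\<^sup>2)" and qp: "summable (\<lambda>j. (q j - p j)\<^sup>2)"
    using summable_sq_diff[OF sq] h(1) p by (auto simp: convexL2_def)
  have hq: "summable (\<lambda>j. (h j - q j)\<^sup>2)" and "sqdist h q = sqdist q h"
    using qh by (simp_all add: power2_commute sqdist_def)
  then have "(h j - p j)\<^sup>2 \<le> sqdist h p"
    and "sqdist h p \<le> 2 * sqdist q h + 2 * sqdist q p"
    using sq_diff_le_sqdist[OF sqdist_triangle_sq(1)[OF hq qp]] sqdist_triangle_sq(2)[OF hq qp]
    by auto
  with h(2) have "\<bar>h j - p j\<bar>\<^sup>2 \<le> (2 * sqrt (sqdist q p))\<^sup>2"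
    using sqdist_nonneg[OF qp] by (simp add: power_mult_distrib)
  moreover have "0 \<le> 2 * sqrt (sqdist q p)" using sqdist_nonneg[OF qp] by simp
  ultimately show ?thesis unfolding h_def by (rule power2_le_imp_le)
qed

definition bump :: "(nat \<Rightarrow> real) \<Rightarrow> nat \<Rightarrow> real \<Rightarrow> nat \<Rightarrow> real" where
  "bump h s \<epsilon> j = h j + (if j = s then \<epsilon> else 0)"

(* A bump at s changes only the second differences at s - 1, s and s + 1, by at most
   twice its size; so it keeps convexity where these second differences are large. *)
lemma convex_seq_bump:
  assumes conv: "convex_seq h"
    and room: "\<And>k. k \<in> {s - 1, s, s + 1} \<Longrightarrow> 2 * \<bar>\<epsilon>\<bar> \<le> sdiff h k"
  shows "convex_seq (bump h s \<epsilon>)"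
  unfolding convex_seq_def
proof (intro allI impI)
  fix k :: nat assume k: "1 \<le> k"
  define d where "d = sdiff (bump h s \<epsilon>) k - sdiff h k"
  have d: "d = (if k + 1 = s then \<epsilon> else 0) - 2 * (if k = s then \<epsilon> else 0)
                + (if k - 1 = s then \<epsilon> else 0)"
    by (simp add: d_def sdiff_def bump_def)
  show "0 \<le> sdiff (bump h s \<epsilon>) k"
  proof (cases "k \<in> {s - 1, s, s + 1}")
    case True
    then have "\<bar>d\<bar> \<le> 2 * \<bar>\<epsilon>\<bar>" using k unfolding d by (cases "k = s"; cases "k + 1 = s") auto
    with room[OF True] show ?thesis unfolding d_def by linarith
  next
    case False
    then have "d = 0" using k unfolding d by auto
    with conv k show ?thesis by (simp add: d_def convex_seq_def)
  qed
qed

lemma sqdist_bump: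
  assumes qh: "summable (\<lambda>j. (q j - h j)\<^sup>2)"
  shows "summable (\<lambda>j. (q j - bump h s \<epsilon> j)\<^sup>2)"
    and "sqdist q (bump h s \<epsilon>) = sqdist q h + (\<epsilon>\<^sup>2 - 2 * \<epsilon> * (q s - h s))"
proof -
  have pointwise: "(\<lambda>j. (q j - bump h s \<epsilon> j)\<^sup>2)
      = (\<lambda>j. (q j - h j)\<^sup>2 + (if j = s then \<epsilon>\<^sup>2 - 2 * \<epsilon> * (q s - h s) else 0))"
    by (auto simp: bump_def power2_eq_square algebra_simps)
  have "(\<lambda>j. (q j - bump h s \<epsilon> j)\<^sup>2) sums (sqdist q h + (\<epsilon>\<^sup>2 - 2 * \<epsilon> * (q s - h s)))"
    unfolding pointwise sqdist_def by (intro sums_add summable_sums qh sums_single)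
  then show "summable (\<lambda>j. (q j - bump h s \<epsilon> j)\<^sup>2)"
    and "sqdist q (bump h s \<epsilon>) = sqdist q h + (\<epsilon>\<^sup>2 - 2 * \<epsilon> * (q s - h s))"
    by (auto simp: sqdist_def sums_iff)
qed

(* Key deterministic fact: if s - 1, s and s + 1 are knots of the projection, then the
   projection interpolates q at s, since otherwise a small bump towards q s stays in C
   and strictly decreases the criterion. *)
lemma ls_convex_interpolates_at_knots:
  assumes sq: "summable (\<lambda>j. (q j)\<^sup>2)"
    and knots: "\<And>k. k \<in> {s - 1, s, s + 1} \<Longrightarrow> 0 < sdiff (ls_convex q) k"
  shows "ls_convex q s = q s"
proof (rule ccontr)
  define h where "h = ls_convex q"
  define a where "a = q s - h s"
  assume "ls_convex q s \<noteq> q s"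
  then have a: "a \<noteq> 0" by (simp add: a_def h_def)
  have hC: "h \<in> convexL2" and hmin: "\<And>p. p \<in> convexL2 \<Longrightarrow> sqdist q h \<le> sqdist q p"
    using ls_convex_minimizes[OF sq] unfolding h_def by auto
  have qh: "summable (\<lambda>j. (q j - h j)\<^sup>2)"
    using summable_sq_diff[OF sq] hC by (simp add: convexL2_def)
  define \<delta> where "\<delta> = min (sdiff h (s - 1)) (min (sdiff h s) (sdiff h (s + 1)))"
  have \<delta>: "0 < \<delta>" "\<And>k. k \<in> {s - 1, s, s + 1} \<Longrightarrow> \<delta> \<le> sdiff h k"
    using knots by (auto simp: \<delta>_def h_def)
  text \<open>Move the value at s a fraction t of the way towards q s.\<close>
  define t where "t = min 1 (\<delta> / (2 * \<bar>a\<bar>))"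
  have t: "0 < t" "t \<le> 1" using \<delta>(1) a by (auto simp: t_def)
  have "t \<le> \<delta> / (2 * \<bar>a\<bar>)" by (simp add: t_def)
  then have "t * (2 * \<bar>a\<bar>) \<le> \<delta>" using a by (simp add: pos_le_divide_eq)
  then have room: "2 * \<bar>t * a\<bar> \<le> \<delta>" using t by (simp add: abs_mult)
  have "convex_seq (bump h s (t * a))"
  proof (rule convex_seq_bump)
    show "convex_seq h" using hC by (simp add: convexL2_def)
    show "2 * \<bar>t * a\<bar> \<le> sdiff h k" if "k \<in> {s - 1, s, s + 1}" for k
      using \<delta>(2)[OF that] room by linarith
  qed
  moreover have "summable (\<lambda>j. (bump h s (t * a) j)\<^sup>2)"
    using summable_sq_diff[OF sq sqdist_bump(1)[OF qh]] by simp
  ultimately have "bump h s (t * a) \<in> convexL2" by (simp add: convexL2_def)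
  from hmin[OF this] have "0 \<le> (t * a)\<^sup>2 - 2 * (t * a) * a"
    by (simp add: sqdist_bump(2)[OF qh] a_def)
  also have "(t * a)\<^sup>2 - 2 * (t * a) * a = a\<^sup>2 * (t * (t - 2))"
    by (simp add: power2_eq_square algebra_simps)
  also have "\<dots> < 0" using a t by (intro mult_pos_neg mult_pos_neg) auto
  finally show False by simp
qed

(* If q n converges to p in l2 and s - 1, s, s + 1 are knots of p, then the
   projections converge coordinatewise to p, so eventually these three points are knots
   of the projection of q n as well, and it interpolates q n at s. *)
lemma ls_convex_eventually_interpolates:
  fixes q :: "nat \<Rightarrow> nat \<Rightarrow> real"
  assumes sq: "\<And>n. summable (\<lambda>j. (q n j)\<^sup>2)" and p: "p \<in> convexL2"
    and knots: "\<forall>k\<in>{s - 1, s, s + 1}. knot p k"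
    and lim: "(\<lambda>n. sqdist (q n) p) \<longlonglongrightarrow> 0"
  shows "eventually (\<lambda>n. ls_convex (q n) s = q n s) sequentially"
proof -
  have coord: "(\<lambda>n. ls_convex (q n) j) \<longlonglongrightarrow> p j" for j
  proof -
    have "\<forall>n. norm (ls_convex (q n) j - p j) \<le> 2 * sqrt (sqdist (q n) p)"
      using ls_convex_close[OF sq p] by simp
    moreover have "(\<lambda>n. 2 * sqrt (sqdist (q n) p)) \<longlonglongrightarrow> 0"
      using tendsto_mult_right_zero[OF tendsto_real_sqrt[OF lim, unfolded real_sqrt_zero]] .
    ultimately have "(\<lambda>n. ls_convex (q n) j - p j) \<longlonglongrightarrow> 0"
      by (rule Lim_null_comparison[OF always_eventually])
    then show ?thesis by (rule LIM_zero_cancel)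
  qed
  have "eventually (\<lambda>n. 0 < sdiff (ls_convex (q n)) k) sequentially" if "k \<in> {s - 1, s, s + 1}" for k
  proof (rule order_tendstoD(1))
    show "(\<lambda>n. sdiff (ls_convex (q n)) k) \<longlonglongrightarrow> sdiff p k"
      unfolding sdiff_def by (intro tendsto_intros coord)
    show "0 < sdiff p k" using knots that unfolding knot_def by blast
  qed
  then have "eventually (\<lambda>n. \<forall>k\<in>{s - 1, s, s + 1}. 0 < sdiff (ls_convex (q n)) k) sequentially"
    by (intro eventually_ball_finite) auto
  then show ?thesis
    by eventually_elim (rule ls_convex_interpolates_at_knots[OF sq], blast)
qed

lemma nonneg_sums_one_le_one:
  fixes p :: "nat \<Rightarrow> real"
  assumes "p sums 1" "\<And>j. 0 \<le> p j"
  shows "p j \<le> 1"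
  using sum_le_suminf[OF sums_summable[OF assms(1)], of "{j}"] assms by (simp add: sums_iff)

lemma sq_diff_le_abs_diff:
  fixes a b :: real
  assumes "0 \<le> a" "a \<le> 1" "0 \<le> b" "b \<le> 1"
  shows "(a - b)\<^sup>2 \<le> \<bar>a - b\<bar>"
proof -
  have "(a - b)\<^sup>2 = \<bar>a - b\<bar> * \<bar>a - b\<bar>" by (simp add: power2_eq_square)
  also have "\<dots> \<le> 1 * \<bar>a - b\<bar>" using assms by (intro mult_right_mono) auto
  finally show ?thesis by simp
qed

lemma pmf_pointwise_imp_sqdist_tendsto:
  fixes q :: "nat \<Rightarrow> nat \<Rightarrow> real" and p :: "nat \<Rightarrow> real"
  assumes q: "eventually (\<lambda>n. q n sums 1) sequentially" "\<And>n j. 0 \<le> q n j"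
    and p: "p sums 1" "\<And>j. 0 \<le> p j"
    and lim: "\<And>j. (\<lambda>n. q n j) \<longlonglongrightarrow> p j"
  shows "(\<lambda>n. sqdist (q n) p) \<longlonglongrightarrow> 0"
proof -
  define d where "d n j = max 0 (p j - q n j)" for n j
  have d_le: "norm (d n j) \<le> p j" for n j using q(2) p(2) by (auto simp: d_def)
  have sd: "summable (d n)" for n
    by (rule summable_comparison_test[OF _ sums_summable[OF p(1)]]) (use d_le in blast)
  text \<open>The negative parts are dominated by p, so their sums vanish (Tannery).\<close>
  have "(\<lambda>n. \<Sum>j. d n j) \<longlonglongrightarrow> (\<Sum>j. max 0 (p j - p j))"
  proof (rule tannerys_theorem[THEN conjunct2, THEN conjunct2])
    show "(\<lambda>n. d n j) \<longlonglongrightarrow> max 0 (p j - p j)" for j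
      unfolding d_def by (intro tendsto_intros lim)
    show "eventually (\<lambda>(j, n). norm (d n j) \<le> p j) (at_top \<times>\<^sub>F sequentially)"
      using d_le by (intro always_eventually) auto
  qed (use sums_summable[OF p(1)] in auto)
  then have d_lim: "(\<lambda>n. 2 * (\<Sum>j. d n j)) \<longlonglongrightarrow> 0"
    using tendsto_mult_right_zero by force
  text \<open>Since both are probability vectors, the squared distance is at most
    twice the total negative part.\<close>
  have "eventually (\<lambda>n. 0 \<le> sqdist (q n) p \<and> sqdist (q n) p \<le> 2 * (\<Sum>j. d n j)) sequentially"
    using q(1)
  proof eventually_elim
    case (elim n)
    have le1: "q n j \<le> 1" "p j \<le> 1" for j
      using nonneg_sums_one_le_one elim q(2) p by blast+
    have bound: "(q n j - p j)\<^sup>2 \<le> (q n j - p j) + 2 * d n j" for j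
    proof -
      have "\<bar>q n j - p j\<bar> = (q n j - p j) + 2 * d n j" by (simp add: d_def max_def abs_if)
      then show ?thesis using sq_diff_le_abs_diff[of "q n j" "p j"] le1 q(2) p(2) by simp
    qed
    have "(\<lambda>j. (q n j - p j) + 2 * d n j) sums (1 - 1 + 2 * (\<Sum>j. d n j))"
      by (intro sums_add sums_diff sums_mult summable_sums elim p(1) sd)
    moreover have "summable (\<lambda>j. (q n j - p j)\<^sup>2)"
      by (rule summable_comparison_test[OF _ sums_summable[OF calculation]]) (use bound in auto)
    ultimately show ?case
      using sqdist_nonneg sums_le[OF bound summable_sums] by (simp add: sqdist_def)
  qed
  then show ?thesis
    by (intro tendsto_sandwich[OF _ _ tendsto_const d_lim]) (auto elim: eventually_mono)
qed

definition hits :: "(nat \<Rightarrow> 'a \<Rightarrow> nat) \<Rightarrow> nat \<Rightarrow> nat \<Rightarrow> 'a \<Rightarrow> real" where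
  "hits X j n \<omega> = (\<Sum>i<n. if X i \<omega> = j then 1 else 0)"

lemma emp_pmf_eq: "emp_pmf X n \<omega> j = hits X j n \<omega> / real n"
proof -
  have "{i. i < n \<and> X i \<omega> = j} = {..<n} \<inter> {i. X i \<omega> = j}" by auto
  then show ?thesis by (simp add: emp_pmf_def hits_def sum.If_cases)
qed

lemma emp_pmf_nonneg: "0 \<le> emp_pmf X n \<omega> j"
  by (simp add: emp_pmf_def)

lemma emp_pmf_outside_sample: "j \<notin> (\<lambda>i. X i \<omega>) ` {..<n} \<Longrightarrow> emp_pmf X n \<omega> j = 0"
  by (auto simp: emp_pmf_def)

lemma emp_pmf_sums_one:
  assumes "n \<ge> 1"
  shows "emp_pmf X n \<omega> sums 1"
proof -
  define K where "K = (\<lambda>i. X i \<omega>) ` {..<n}"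
  have K: "finite K" by (simp add: K_def)
  have "emp_pmf X n \<omega> sums (\<Sum>j\<in>K. emp_pmf X n \<omega> j)"
    by (rule sums_finite[OF K]) (simp add: emp_pmf_outside_sample K_def)
  also have "(\<Sum>j\<in>K. emp_pmf X n \<omega> j) = (\<Sum>i<n. \<Sum>j\<in>K. if X i \<omega> = j then 1 else 0) / real n"
    by (simp add: emp_pmf_eq hits_def sum_divide_distrib[symmetric] sum.swap[of _ K])
  also have "\<dots> = 1"
    using K assms by (simp add: K_def sum.delta)
  finally show ?thesis .
qed

lemma emp_pmf_square_summable: "summable (\<lambda>j. (emp_pmf X n \<omega> j)\<^sup>2)"
  by (rule summable_finite[of "(\<lambda>i. X i \<omega>) ` {..<n}"]) (auto simp: emp_pmf_outside_sample)

lemma cdf_distr_real: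
  assumes "prob_space M" and [measurable]: "Z \<in> borel_measurable M"
  shows "cdf (distr M borel Z) x = measure M {\<omega>\<in>space M. Z \<omega> \<le> x}"
proof -
  have "cdf (distr M borel Z) x = measure M (Z -` {..x} \<inter> space M)"
    unfolding cdf_def by (rule measure_distr) auto
  also have "Z -` {..x} \<inter> space M = {\<omega>\<in>space M. Z \<omega> \<le> x}" by auto
  finally show ?thesis .
qed

(* If almost every outcome eventually avoids E n, then prob (E n) tends to zero
   (dominated convergence for the indicators). *)
lemma (in prob_space) prob_eventually_avoided_tendsto_zero:
  assumes E: "\<And>n. E n \<in> sets M" and ae: "AE \<omega> in M. eventually (\<lambda>n. \<omega> \<notin> E n) sequentially"
  shows "(\<lambda>n. prob (E n)) \<longlonglongrightarrow> 0"
proof -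
  have "(\<lambda>n. integral\<^sup>L M (indicator (E n) :: 'a \<Rightarrow> real)) \<longlonglongrightarrow> integral\<^sup>L M (\<lambda>_. 0 :: real)"
  proof (rule integral_dominated_convergence[where w="\<lambda>_. 1"])
    show "AE \<omega> in M. (\<lambda>n. indicator (E n) \<omega> :: real) \<longlonglongrightarrow> 0"
      using ae by eventually_elim (auto elim!: tendsto_eventually[OF eventually_mono])
  qed (auto simp: E intro!: borel_measurable_indicator)
  then show ?thesis using E by (simp add: Int_absorb2 sets.sets_into_space)
qed

lemma (in prob_space) weak_conv_eventually_ae_eq:
  fixes Z W :: "nat \<Rightarrow> 'a \<Rightarrow> real"
  assumes [measurable]: "\<And>n. Z n \<in> borel_measurable M" "\<And>n. W n \<in> borel_measurable M"
    and conv: "weak_conv_m (\<lambda>n. distr M borel (Z n)) \<mu>"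
    and ae: "AE \<omega> in M. eventually (\<lambda>n. W n \<omega> = Z n \<omega>) sequentially"
  shows "weak_conv_m (\<lambda>n. distr M borel (W n)) \<mu>"
  unfolding weak_conv_m_def weak_conv_def
proof (intro allI impI)
  fix x assume "isCont (cdf \<mu>) x"
  then have Z: "(\<lambda>n. prob {\<omega>\<in>space M. Z n \<omega> \<le> x}) \<longlonglongrightarrow> cdf \<mu> x"
    using conv by (simp add: weak_conv_m_def weak_conv_def cdf_distr_real prob_space_axioms)
  define E where "E n = {\<omega>\<in>space M. W n \<omega> \<noteq> Z n \<omega>}" for n
  have E: "E n \<in> sets M" for n unfolding E_def by measurable
  have E_lim: "(\<lambda>n. prob (E n)) \<longlonglongrightarrow> 0"
    using ae by (intro prob_eventually_avoided_tendsto_zero E) (auto simp: E_def elim: eventually_mono)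
  have diff: "\<bar>prob {\<omega>\<in>space M. W n \<omega> \<le> x} - prob {\<omega>\<in>space M. Z n \<omega> \<le> x}\<bar> \<le> prob (E n)" for n
  proof -
    have "prob {\<omega>\<in>space M. W n \<omega> \<le> x} \<le> prob ({\<omega>\<in>space M. Z n \<omega> \<le> x} \<union> E n)"
      "prob {\<omega>\<in>space M. Z n \<omega> \<le> x} \<le> prob ({\<omega>\<in>space M. W n \<omega> \<le> x} \<union> E n)"
      by (auto intro!: finite_measure_mono simp: E_def E)
    moreover have "prob ({\<omega>\<in>space M. Z n \<omega> \<le> x} \<union> E n) \<le> prob {\<omega>\<in>space M. Z n \<omega> \<le> x} + prob (E n)"
      "prob ({\<omega>\<in>space M. W n \<omega> \<le> x} \<union> E n) \<le> prob {\<omega>\<in>space M. W n \<omega> \<le> x} + prob (E n)"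
      by (auto intro!: measure_Un_le simp: E)
    ultimately show ?thesis by linarith
  qed
  have "(\<lambda>n. prob {\<omega>\<in>space M. W n \<omega> \<le> x} - prob {\<omega>\<in>space M. Z n \<omega> \<le> x}) \<longlonglongrightarrow> 0"
    using diff by (intro Lim_null_comparison[OF always_eventually E_lim]) auto
  from tendsto_add[OF this Z]
  show "(\<lambda>n. cdf (distr M borel (W n)) x) \<longlonglongrightarrow> cdf \<mu> x"
    by (simp add: cdf_distr_real prob_space_axioms)
qed

lemma cdf_normal_scale:
  assumes \<sigma>: "\<sigma> > 0"
  shows "cdf (density lborel (normal_density 0 \<sigma>)) x = cdf std_normal_distribution (x / \<sigma>)"
proof -
  define N where "N = std_normal_distribution"
  interpret N: prob_space N
    unfolding N_def using real_dist_normal_dist real_distribution_def by blast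
  have "distributed N lborel (\<lambda>x. x) std_normal_density"
    unfolding distributed_def N_def by (auto intro: distr_id2)
  from N.normal_density_affine[OF this, of \<sigma> 0] \<sigma>
  have scaled: "distr N lborel (\<lambda>x. \<sigma> * x) = density lborel (normal_density 0 \<sigma>)"
    by (simp add: distributed_def)
  have "cdf (density lborel (normal_density 0 \<sigma>)) x = measure N ((\<lambda>x. \<sigma> * x) -` {..x} \<inter> space N)"
    unfolding cdf_def scaled[symmetric] by (rule measure_distr) (auto simp: N_def)
  also have "(\<lambda>x. \<sigma> * x) -` {..x} \<inter> space N = {..x / \<sigma>}"
    using \<sigma> by (auto simp: N_def field_simps)
  finally show ?thesis by (simp add: cdf_def N_def)
qed

lemma (in prob_space) weak_conv_std_normal_scale:
  fixes Z :: "nat \<Rightarrow> 'a \<Rightarrow> real"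
  assumes [measurable]: "\<And>n. Z n \<in> borel_measurable M"
    and conv: "weak_conv_m (\<lambda>n. distr M borel (Z n)) std_normal_distribution"
    and \<sigma>: "\<sigma> > 0"
  shows "weak_conv_m (\<lambda>n. distr M borel (\<lambda>\<omega>. \<sigma> * Z n \<omega>)) (density lborel (normal_density 0 \<sigma>))"
  unfolding weak_conv_m_def weak_conv_def
proof (intro allI impI)
  fix x assume cont: "isCont (cdf (density lborel (normal_density 0 \<sigma>))) x"
  have scale: "cdf (density lborel (normal_density 0 \<sigma>)) = (\<lambda>y. cdf std_normal_distribution (y / \<sigma>))"
    using cdf_normal_scale[OF \<sigma>] by blast
  have "isCont (\<lambda>y. cdf (density lborel (normal_density 0 \<sigma>)) (\<sigma> * y)) (x / \<sigma>)"
  proof (rule isCont_o2[where f="\<lambda>y. \<sigma> * y"])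
    show "isCont (\<lambda>y. \<sigma> * y) (x / \<sigma>)" by (intro continuous_intros)
    show "isCont (cdf (density lborel (normal_density 0 \<sigma>))) (\<sigma> * (x / \<sigma>))"
      using \<sigma> cont by simp
  qed
  then have "isCont (cdf std_normal_distribution) (x / \<sigma>)"
    using \<sigma> by (simp add: scale)
  then have "(\<lambda>n. cdf (distr M borel (Z n)) (x / \<sigma>)) \<longlonglongrightarrow> cdf std_normal_distribution (x / \<sigma>)"
    using conv unfolding weak_conv_m_def weak_conv_def by blast
  moreover have "{\<omega>\<in>space M. Z n \<omega> \<le> x / \<sigma>} = {\<omega>\<in>space M. \<sigma> * Z n \<omega> \<le> x}" for n
    using \<sigma> by (auto simp: field_simps)
  ultimately show "(\<lambda>n. cdf (distr M borel (\<lambda>\<omega>. \<sigma> * Z n \<omega>)) x)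
      \<longlonglongrightarrow> cdf (density lborel (normal_density 0 \<sigma>)) x"
    by (simp add: cdf_distr_real prob_space_axioms scale)
qed

locale iid_sample = prob_space M for M :: "'a measure" +
  fixes X :: "nat \<Rightarrow> 'a \<Rightarrow> nat" and p0 :: "nat \<Rightarrow> real"
  assumes X_measurable[measurable]: "\<And>i. X i \<in> measurable M (count_space UNIV)"
    and X_indep: "indep_vars (\<lambda>_. count_space UNIV) X UNIV"
    and X_pmf: "\<And>i j. measure M {\<omega>\<in>space M. X i \<omega> = j} = p0 j"
begin

lemma X_identically_distributed:
  "distr M (count_space UNIV) (X i) = distr M (count_space UNIV) (X 0)"
proof (rule measure_eqI_countable[where A=UNIV])
  fix j :: nat
  have "emeasure (distr M (count_space UNIV) (X k)) {j} = ennreal (p0 j)" for k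
  proof -
    have "X k -` {j} \<inter> space M = {\<omega>\<in>space M. X k \<omega> = j}" by auto
    then show ?thesis by (simp add: emeasure_distr emeasure_eq_measure X_pmf)
  qed
  then show "emeasure (distr M (count_space UNIV) (X i)) {j}
      = emeasure (distr M (count_space UNIV) (X 0)) {j}" by simp
qed auto

lemma transformed_identically_distributed:
  "distr M borel (\<lambda>\<omega>. f (X i \<omega>) :: real) = distr M borel (\<lambda>\<omega>. f (X 0 \<omega>))"
proof -
  have "distr M borel (\<lambda>\<omega>. f (X k \<omega>)) = distr (distr M (count_space UNIV) (X k)) borel f" for k
    by (subst distr_distr) (auto simp: o_def)
  then show ?thesis using X_identically_distributed[of i] by simp
qed

lemma transformed_indep: "indep_vars (\<lambda>_. borel) (\<lambda>i \<omega>. f (X i \<omega>) :: real) UNIV"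
  by (rule indep_vars_compose2[OF X_indep]) auto

lemma expectation_hit: "expectation (\<lambda>\<omega>. if X i \<omega> = j then 1 else 0 :: real) = p0 j"
proof -
  have "expectation (\<lambda>\<omega>. if X i \<omega> = j then 1 else 0 :: real)
      = expectation (indicator {\<omega>\<in>space M. X i \<omega> = j})"
    by (rule Bochner_Integration.integral_cong) (auto simp: indicator_def)
  then show ?thesis using X_pmf[of i j] by (simp add: Int_absorb2 subset_eq)
qed

lemma hits_measurable[measurable]: "(\<lambda>\<omega>. hits X j n \<omega>) \<in> borel_measurable M"
  unfolding hits_def by measurable

lemma hits_deviation_bound:
  assumes \<epsilon>: "\<epsilon> > 0" and n: "n \<ge> 1"
  shows "prob {\<omega>\<in>space M. real n * \<epsilon> \<le> \<bar>hits X j n \<omega> - real n * p0 j\<bar>} \<le> 2 * exp (-2 * \<epsilon>\<^sup>2) ^ n"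
proof -
  define Y where "Y i \<omega> = (if X i \<omega> = j then 1 else 0 :: real)" for i \<omega>
  interpret H: Hoeffding_ineq_iid M "{..<n}" Y "Y 0" 0 1 "expectation (Y 0)"
  proof unfold_locales
    show "indep_vars (\<lambda>_. borel) Y {..<n}"
      using indep_vars_subset[OF transformed_indep[of "\<lambda>k. if k = j then 1 else 0"]]
      unfolding Y_def by auto
    show "distr M borel (Y i) = distr M borel (Y 0)" for i
      unfolding Y_def using transformed_identically_distributed[of "\<lambda>k. if k = j then 1 else 0" i]
      by simp
    show "random_variable borel (Y 0)" unfolding Y_def by simp
  qed (auto simp: Y_def)
  have "prob {\<omega>\<in>space M. real n * \<epsilon> \<le> \<bar>(\<Sum>i\<in>{..<n}. Y i \<omega>) - real (card {..<n}) * expectation (Y 0)\<bar>}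
      \<le> 2 * exp (-2 * (real n * \<epsilon>)\<^sup>2 / (real (card {..<n}) * (1 - 0)\<^sup>2))"
    using \<epsilon> n by (intro H.Hoeffding_ineq_abs_ge) (auto simp: lessThan_empty_iff)
  also have "exp (-2 * (real n * \<epsilon>)\<^sup>2 / (real (card {..<n}) * (1 - 0)\<^sup>2)) = exp (-2 * \<epsilon>\<^sup>2) ^ n"
    using n by (simp add: power2_eq_square exp_of_nat_mult[symmetric])
  finally show ?thesis
    using expectation_hit[of 0 j] unfolding Y_def hits_def by simp
qed

(* Strong law for the empirical frequencies, via Hoeffding and Borel-Cantelli. *)
lemma emp_pmf_eventually_close:
  assumes \<epsilon>: "\<epsilon> > 0"
  shows "AE \<omega> in M. eventually (\<lambda>n. \<bar>emp_pmf X n \<omega> j - p0 j\<bar> < \<epsilon>) sequentially"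
proof -
  define A where "A n = {\<omega>\<in>space M. real n * \<epsilon> \<le> \<bar>hits X j n \<omega> - real n * p0 j\<bar>}" for n
  have A: "A n \<in> sets M" for n unfolding A_def by measurable
  have "summable (\<lambda>n. measure M (A n))"
  proof (rule summable_comparison_test)
    show "\<exists>N. \<forall>n\<ge>N. norm (measure M (A n)) \<le> 2 * exp (-2 * \<epsilon>\<^sup>2) ^ n"
      using hits_deviation_bound[OF \<epsilon>] unfolding A_def by (intro exI[of _ 1]) auto
    show "summable (\<lambda>n. 2 * exp (-2 * \<epsilon>\<^sup>2) ^ n)"
      using \<epsilon> by (intro summable_mult summable_geometric) simp
  qed
  then have "AE \<omega> in M. eventually (\<lambda>n. \<omega> \<in> space M - A n) sequentially"
    by (intro borel_cantelli_AE1[OF A]) (simp_all add: emeasure_eq_measure)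
  then show ?thesis
  proof (rule AE_mp, intro AE_I2 impI)
    fix \<omega> assume "eventually (\<lambda>n. \<omega> \<in> space M - A n) sequentially"
    with eventually_ge_at_top[of 1]
    show "eventually (\<lambda>n. \<bar>emp_pmf X n \<omega> j - p0 j\<bar> < \<epsilon>) sequentially"
    proof eventually_elim
      case (elim n)
      then have "\<bar>hits X j n \<omega> - real n * p0 j\<bar> < real n * \<epsilon>" by (auto simp: A_def)
      moreover have "emp_pmf X n \<omega> j - p0 j = (hits X j n \<omega> - real n * p0 j) / real n"
        using elim by (simp add: emp_pmf_eq field_simps)
      ultimately show ?case using elim by (simp add: abs_divide pos_divide_less_eq mult.commute)
    qed
  qed
qed

lemma emp_pmf_tendsto: "AE \<omega> in M. \<forall>j. (\<lambda>n. emp_pmf X n \<omega> j) \<longlonglongrightarrow> p0 j"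
proof -
  have "AE \<omega> in M. \<forall>j m. eventually (\<lambda>n. \<bar>emp_pmf X n \<omega> j - p0 j\<bar> < 1 / real (Suc m)) sequentially"
    using emp_pmf_eventually_close by (simp add: AE_all_countable)
  then show ?thesis
  proof (rule AE_mp, intro AE_I2 impI allI tendstoI)
    fix \<omega> j and e :: real
    assume close: "\<forall>j m. eventually (\<lambda>n. \<bar>emp_pmf X n \<omega> j - p0 j\<bar> < 1 / real (Suc m)) sequentially"
      and "0 < e"
    then obtain m :: nat where m: "1 / real (Suc m) < e" by (metis nat_approx_posE)
    from close[rule_format, of j m]
    show "eventually (\<lambda>n. dist (emp_pmf X n \<omega> j) (p0 j) < e) sequentially"
      by eventually_elim (use m in \<open>simp add: dist_real_def\<close>)
  qed
qed

end

lemma convex_pmf_in_convexL2: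
  fixes p :: "nat \<Rightarrow> real"
  assumes "p sums 1" "\<And>j. 0 \<le> p j" "convex_seq p"
  shows "p \<in> convexL2"
proof -
  have "norm ((p j)\<^sup>2) \<le> p j" for j
    using nonneg_sums_one_le_one[OF assms(1,2), of j] assms(2)[of j]
    by (simp add: power2_eq_square mult_left_le)
  then have "summable (\<lambda>j. (p j)\<^sup>2)"
    by (intro summable_comparison_test[OF _ sums_summable[OF assms(1)]]) auto
  with assms(3) show ?thesis by (simp add: convexL2_def)
qed

lemma convex_pmf_variance_pos:
  fixes p :: "nat \<Rightarrow> real"
  assumes p: "p \<in> convexL2" "p sums 1" and s: "s \<ge> 1" and knot: "knot p (s + 1)"
  shows "0 < p s * (1 - p s)"
proof -
  have pos: "0 < p s" using convexL2_pos_before_knot[OF p(1) knot] by simp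
  have "sum p {0, s} \<le> 1"
    using sum_le_suminf[OF sums_summable[OF p(2)], of "{0, s}"] convexL2_nonneg[OF p(1)] p(2)
    by (simp add: sums_iff)
  then have "p 0 + p s \<le> 1" using s by simp
  with convexL2_le_first[OF p(1), of s] pos show ?thesis by simp
qed

lemma scaled_deviation_eq:
  fixes S m \<sigma> :: real
  assumes n: "n \<ge> 1" and \<sigma>: "\<sigma> > 0"
  shows "sqrt (real n) * (S / real n - m) = \<sigma> * ((S - real n * m) / sqrt (real n * \<sigma>\<^sup>2))"
proof -
  have "sqrt (real n) > 0" using n by simp
  moreover have "sqrt (real n * \<sigma>\<^sup>2) = sqrt (real n) * \<sigma>" using \<sigma> by (simp add: real_sqrt_mult)
  moreover have "real n = sqrt (real n) * sqrt (real n)" by simp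
  ultimately show ?thesis using \<sigma> by (simp add: field_simps)
qed

context iid_sample
begin

lemma ls_convex_emp_pmf_eventually_interpolates:
  assumes p0: "p0 sums 1" "\<And>j. 0 \<le> p0 j" "p0 \<in> convexL2"
    and knots: "\<forall>k\<in>{s - 1, s, s + 1}. knot p0 k"
  shows "AE \<omega> in M. eventually (\<lambda>n. ls_convex (emp_pmf X n \<omega>) s = emp_pmf X n \<omega> s) sequentially"
  using emp_pmf_tendsto
proof (rule AE_mp, intro AE_I2 impI)
  fix \<omega> assume "\<forall>j. (\<lambda>n. emp_pmf X n \<omega> j) \<longlonglongrightarrow> p0 j"
  moreover have "eventually (\<lambda>n. emp_pmf X n \<omega> sums 1) sequentially"
    using eventually_ge_at_top[of 1] by eventually_elim (rule emp_pmf_sums_one)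
  ultimately have "(\<lambda>n. sqdist (emp_pmf X n \<omega>) p0) \<longlonglongrightarrow> 0"
    by (intro pmf_pointwise_imp_sqdist_tendsto p0 emp_pmf_nonneg) auto
  then show "eventually (\<lambda>n. ls_convex (emp_pmf X n \<omega>) s = emp_pmf X n \<omega> s) sequentially"
    by (rule ls_convex_eventually_interpolates[OF emp_pmf_square_summable p0(3) knots])
qed

lemma hits_clt:
  assumes \<sigma>: "\<sigma> = sqrt (p0 j * (1 - p0 j))" "\<sigma> > 0"
  shows "weak_conv_m (\<lambda>n. distr M borel (\<lambda>\<omega>. (hits X j n \<omega> - real n * p0 j) / sqrt (real n * \<sigma>\<^sup>2)))
           std_normal_distribution"
proof -
  define Y where "Y i \<omega> = (if X i \<omega> = j then 1 else 0 :: real)" for i \<omega>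
  have "0 < p0 j * (1 - p0 j)" using \<sigma> by simp
  then have \<sigma>2: "\<sigma>\<^sup>2 = p0 j * (1 - p0 j)" using \<sigma>(1) by simp
  have Y_measurable[measurable]: "Y n \<in> borel_measurable M" for n
    unfolding Y_def by measurable
  have Y_int: "integrable M (Y n)" for n
    by (rule integrable_const_bound[where B=1]) (auto simp: Y_def)
  have EY: "expectation (Y n) = p0 j" for n unfolding Y_def by (rule expectation_hit)
  have "weak_conv_m (\<lambda>n. distr M borel (\<lambda>\<omega>. (\<Sum>i<n. Y i \<omega> - p0 j) / sqrt (real n * \<sigma>\<^sup>2)))
          std_normal_distribution"
  proof (rule central_limit_theorem[where \<mu>="distr M borel (Y 0)"])
    show "indep_vars (\<lambda>i. borel) Y UNIV" unfolding Y_def by (rule transformed_indep)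
    show "distr M borel (Y n) = distr M borel (Y 0)" for n
      unfolding Y_def by (rule transformed_identically_distributed)
    show "integrable M (\<lambda>\<omega>. (Y n \<omega>)\<^sup>2)" for n
      by (rule integrable_const_bound[where B=1]) (auto simp: Y_def)
    show "variance (Y n) = \<sigma>\<^sup>2" for n
    proof -
      have "variance (Y n) = expectation (\<lambda>\<omega>. (1 - 2 * p0 j) * Y n \<omega> + (p0 j)\<^sup>2)"
        unfolding EY
        by (rule Bochner_Integration.integral_cong) (auto simp: Y_def power2_eq_square algebra_simps)
      also have "\<dots> = (1 - 2 * p0 j) * p0 j + (p0 j)\<^sup>2"
        using Y_int by (simp add: prob_space EY)
      also have "\<dots> = \<sigma>\<^sup>2" unfolding \<sigma>2 by (simp add: power2_eq_square algebra_simps)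
      finally show ?thesis .
    qed
  qed (use EY \<sigma> in auto)
  then show ?thesis by (simp add: Y_def hits_def sum_subtractf)
qed

lemma hits_clt_scaled:
  assumes \<sigma>: "\<sigma> = sqrt (p0 j * (1 - p0 j))" "\<sigma> > 0"
  shows "weak_conv_m
           (\<lambda>n. distr M borel (\<lambda>\<omega>. \<sigma> * ((hits X j n \<omega> - real n * p0 j) / sqrt (real n * \<sigma>\<^sup>2))))
           (density lborel (normal_density 0 \<sigma>))"
  by (rule weak_conv_std_normal_scale[OF _ hits_clt[OF \<sigma>] \<sigma>(2)]) measurable

lemma scaled_error_eventually_eq:
  assumes interp: "AE \<omega> in M. eventually (\<lambda>n. ls_convex (emp_pmf X n \<omega>) s = emp_pmf X n \<omega> s) sequentially"
    and \<sigma>: "\<sigma> > 0"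
  shows "AE \<omega> in M. eventually (\<lambda>n. sqrt (real n) * (ls_convex (emp_pmf X n \<omega>) s - p0 s)
           = \<sigma> * ((hits X s n \<omega> - real n * p0 s) / sqrt (real n * \<sigma>\<^sup>2))) sequentially"
  using interp
proof (rule AE_mp, intro AE_I2 impI)
  fix \<omega> assume "eventually (\<lambda>n. ls_convex (emp_pmf X n \<omega>) s = emp_pmf X n \<omega> s) sequentially"
  with eventually_ge_at_top[of 1]
  show "eventually (\<lambda>n. sqrt (real n) * (ls_convex (emp_pmf X n \<omega>) s - p0 s)
           = \<sigma> * ((hits X s n \<omega> - real n * p0 s) / sqrt (real n * \<sigma>\<^sup>2))) sequentially"
  proof eventually_elim
    case (elim n)
    then show ?case
      using scaled_deviation_eq[OF elim(1) \<sigma>, of "hits X s n \<omega>" "p0 s"] by (simp add: emp_pmf_eq)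
  qed
qed

(* Any functional of the empirical pmf is measurable, since the empirical pmf depends
   only on the finitely many discrete observations X 0, ..., X (n - 1). *)
lemma emp_pmf_functional_measurable:
  "(\<lambda>\<omega>. h (emp_pmf X n \<omega>) :: real) \<in> borel_measurable M"
proof -
  define sample where "sample \<omega> = map (\<lambda>i. X i \<omega>) [0..<n]" for \<omega>
  have "sample \<in> measurable M (count_space UNIV)"
  proof (rule measurable_count_space_eq_countable[THEN iffD2, OF countableI_type], intro conjI ballI)
    fix l :: "nat list"
    have "sample \<omega> = l \<longleftrightarrow> length l = n \<and> (\<forall>i\<in>{..<n}. X i \<omega> = l ! i)" for \<omega>
      unfolding sample_def list_eq_iff_nth_eq by auto
    then have "sample -` {l} \<inter> space M
        = {\<omega>\<in>space M. length l = n} \<inter> {\<omega>\<in>space M. \<forall>i\<in>{..<n}. X i \<omega> = l ! i}"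
      by blast
    also have "\<dots> \<in> sets M"
    proof (intro sets.Int sets.sets_Collect_finite_All)
      show "{\<omega> \<in> space M. X i \<omega> = l ! i} \<in> sets M" for i by measurable
    qed simp_all
    finally show "sample -` {l} \<inter> space M \<in> sets M" .
  qed simp
  moreover have "emp_pmf X n \<omega> = (\<lambda>j. real (card {i. i < n \<and> sample \<omega> ! i = j}) / real n)" for \<omega>
  proof -
    have "{i. i < n \<and> sample \<omega> ! i = j} = {i. i < n \<and> X i \<omega> = j}" for j
      by (auto simp: sample_def)
    then show ?thesis by (intro ext) (simp add: emp_pmf_def)
  qed
  ultimately show ?thesis
    using measurable_compose[where f=sample and g="\<lambda>l. h (\<lambda>j. real (card {i. i < n \<and> l ! i = j}) / real n)"]
    by simp
qed
end

theorem mainTheorem11: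
  fixes M :: "'a measure" and X :: "nat \<Rightarrow> 'a \<Rightarrow> nat"
    and p0 :: "nat \<Rightarrow> real" and s :: nat
  assumes "prob_space M"
    and "\<And>i. X i \<in> measurable M (count_space UNIV)"
    and "prob_space.indep_vars M (\<lambda>_. count_space UNIV) X UNIV"
    and "\<And>i j. measure M {\<omega> \<in> space M. X i \<omega> = j} = p0 j"
    and "\<And>j. p0 j \<ge> 0"
    and "p0 sums 1"
    and "convex_seq p0"
    and "(\<forall>j. p0 j > 0) \<or> (\<exists>S::nat. S \<ge> 1 \<and> (\<forall>j. p0 j > 0 \<longleftrightarrow> j \<le> S))"
    and "s \<ge> 2"
    and "knot p0 (s - 1)" and "knot p0 s" and "knot p0 (s + 1)"
  shows "(AE \<omega> in M. \<exists>n0. \<forall>n\<ge>n0.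
            ls_convex (emp_pmf X n \<omega>) s = emp_pmf X n \<omega> s)
       \<and> weak_conv_m
           (\<lambda>n. distr M borel
                  (\<lambda>\<omega>. sqrt (real n) * (ls_convex (emp_pmf X n \<omega>) s - p0 s)))
           (density lborel (normal_density 0 (sqrt (p0 s * (1 - p0 s)))))"
proof -
  interpret iid_sample M X p0
    using assms(1-4) by (intro iid_sample.intro iid_sample_axioms.intro) auto
  have p0C: "p0 \<in> convexL2" using assms(6,5,7) by (rule convex_pmf_in_convexL2)
  have knots: "\<forall>k\<in>{s - 1, s, s + 1}. knot p0 k" using assms(10-12) by simp
  have interp: "AE \<omega> in M. eventually (\<lambda>n. ls_convex (emp_pmf X n \<omega>) s = emp_pmf X n \<omega> s) sequentially"
    using assms(6,5) p0C knots by (rule ls_convex_emp_pmf_eventually_interpolates)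
  define \<sigma> where "\<sigma> = sqrt (p0 s * (1 - p0 s))"
  have \<sigma>: "\<sigma> > 0"
    using convex_pmf_variance_pos[OF p0C assms(6) _ assms(12)] assms(9) by (simp add: \<sigma>_def)
  have "weak_conv_m (\<lambda>n. distr M borel (\<lambda>\<omega>. sqrt (real n) * (ls_convex (emp_pmf X n \<omega>) s - p0 s)))
          (density lborel (normal_density 0 \<sigma>))"
    by (rule weak_conv_eventually_ae_eq[OF _ emp_pmf_functional_measurable
          hits_clt_scaled[OF \<sigma>_def \<sigma>] scaled_error_eventually_eq[OF interp \<sigma>]]) measurable
  with interp show ?thesis unfolding \<sigma>_def eventually_sequentially by simp
qed

end
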